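(* Let $I$ be (the matrix of) a te-interlace and let $p$ be a pivot of $I$. Then every nonzero entry of $I/\!\!/p$ has absolute value $2$, and in the $\{0,\pm1\}$-matrix $\tfrac12(I/\!\!/p)$ no two rows form a te-lace. In particular, the rows of $\tfrac12(I/\!\!/p)$ contain no te-interlace.
   Context: A set of vectors is identified with the matrix whose rows are these vectors. A matrix is totally equimodular if every set of linearly independent rows forms a matrix of full row rank whose nonzero maximal minors all have the same absolute value, and totally unimodular if all its square submatrices have determinant in $\{0,\pm1\}$. A linearly independent set of $\{0,\pm1\}$-vectors is a te-set if its matrix is totally equimodular, a tu-set if its matrix is totally unimodular, a te-lace if it is a te-set, not a tu-set, and all its proper subsets are tu-sets, and a te-interlace if it is a te-set, not a tu-set, and every pair of its vectors is a te-lace. A pivot is a position $p=(i,j)$ with nonzero entry; $I/p$ is obtained by dividing row $i$ by that entry and adding multiples of it to the other rows so that column $j$ becomes the $i$-th unit vector; the trim $I/\!\!/p$ is obtained from $I/p$ by deleting row $i$ and column $j$. *)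

theory Defs
  imports "Jordan_Normal_Form.Determinant" "Jordan_Normal_Form.DL_Submatrix"
begin

text \<open>Matrices are real matrices of the JNF type 'a mat. A set of vectors is identified
with the matrix whose rows are these vectors.\<close>

definition zero_pm1 :: "real mat \<Rightarrow> bool" where
  "zero_pm1 A \<longleftrightarrow> (\<forall>i<dim_row A. \<forall>j<dim_col A. A $$ (i,j) \<in> {-1, 0, 1})"

definition rows_lin_indep :: "real mat \<Rightarrow> bool" where
  "rows_lin_indep A \<longleftrightarrow>
     (\<forall>c :: nat \<Rightarrow> real. (\<forall>j<dim_col A. (\<Sum>i<dim_row A. c i * A $$ (i,j)) = 0)
        \<longrightarrow> (\<forall>i<dim_row A. c i = 0))"

definition full_row_rank :: "real mat \<Rightarrow> bool" where
  "full_row_rank A \<longleftrightarrow> rows_lin_indep A"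

definition row_sub :: "real mat \<Rightarrow> nat set \<Rightarrow> real mat" where
  "row_sub A S = submatrix A S UNIV"

definition tot_unimod :: "real mat \<Rightarrow> bool" where
  "tot_unimod A \<longleftrightarrow>
     (\<forall>R C. R \<subseteq> {..<dim_row A} \<longrightarrow> C \<subseteq> {..<dim_col A} \<longrightarrow> card R = card C \<longrightarrow>
        det (submatrix A R C) \<in> {-1, 0, 1})"

definition tot_equimod :: "real mat \<Rightarrow> bool" where
  "tot_equimod A \<longleftrightarrow>
     (\<forall>S. S \<subseteq> {..<dim_row A} \<longrightarrow> rows_lin_indep (row_sub A S) \<longrightarrow>
        full_row_rank (row_sub A S) \<and>
        (\<forall>C1 C2. C1 \<subseteq> {..<dim_col A} \<longrightarrow> C2 \<subseteq> {..<dim_col A} \<longrightarrow>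
           card C1 = card S \<longrightarrow> card C2 = card S \<longrightarrow>
           det (submatrix A S C1) \<noteq> 0 \<longrightarrow> det (submatrix A S C2) \<noteq> 0 \<longrightarrow>
           \<bar>det (submatrix A S C1)\<bar> = \<bar>det (submatrix A S C2)\<bar>))"

definition te_set :: "real mat \<Rightarrow> bool" where
  "te_set A \<longleftrightarrow> zero_pm1 A \<and> rows_lin_indep A \<and> tot_equimod A"

definition tu_set :: "real mat \<Rightarrow> bool" where
  "tu_set A \<longleftrightarrow> zero_pm1 A \<and> rows_lin_indep A \<and> tot_unimod A"

definition te_lace :: "real mat \<Rightarrow> bool" where
  "te_lace A \<longleftrightarrow> te_set A \<and> \<not> tu_set A \<and>
     (\<forall>S. S \<subset> {..<dim_row A} \<longrightarrow> tu_set (row_sub A S))"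

definition te_interlace :: "real mat \<Rightarrow> bool" where
  "te_interlace A \<longleftrightarrow> te_set A \<and> \<not> tu_set A \<and>
     (\<forall>i1 i2. i1 < dim_row A \<longrightarrow> i2 < dim_row A \<longrightarrow> i1 \<noteq> i2 \<longrightarrow>
        te_lace (row_sub A {i1, i2}))"

definition pivot_op :: "real mat \<Rightarrow> nat \<Rightarrow> nat \<Rightarrow> real mat" where
  "pivot_op A i j = mat (dim_row A) (dim_col A) (\<lambda>(r,c).
      if r = i then A $$ (i,c) / A $$ (i,j)
      else A $$ (r,c) - (A $$ (r,j) / A $$ (i,j)) * A $$ (i,c))"

definition trim :: "real mat \<Rightarrow> nat \<Rightarrow> nat \<Rightarrow> real mat" where
  "trim A i j = submatrix (pivot_op A i j) (- {i}) (- {j})"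

end

theory Submission
  imports Defs
begin

text \<open>Every two rows of a te-interlace form a te-lace, and a two-row te-lace has all its
2\<times>2 minors in {0, \<plusminus>2}: it is not totally unimodular, so some 2\<times>2 minor is \<plusminus>2, and
equimodularity forces every nonzero one to have the same absolute value. Pivoting on (i,j)
turns the entry (a,c) into the minor on rows i,a and columns j,c divided by the pivot \<plusminus>1, so
all entries of the trim lie in {0, \<plusminus>2}. A minor s x - z y = \<plusminus>2 of {0,\<plusminus>1}-numbers forces
s x = - z y, so every nonzero entry of the halved trim equals -s I(a,j) I(i,c): its support
carries the sign pattern of a rank-one matrix, whence all its 2\<times>2 minors lie in {0, \<plusminus>1}.
A {0,\<plusminus>1}-matrix with this property and at most two rows is totally unimodular, so no pair
of rows of the halved trim is a te-lace, and no set of its rows is a te-interlace.\<close>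

definition minor2 :: "real mat \<Rightarrow> nat \<Rightarrow> nat \<Rightarrow> nat \<Rightarrow> nat \<Rightarrow> real" where
  "minor2 A a b c d = A $$ (a,c) * A $$ (b,d) - A $$ (a,d) * A $$ (b,c)"

lemma minor2_swap_rows: "minor2 A b a c d = - minor2 A a b c d"
  unfolding minor2_def by simp

lemma minor2_swap_cols: "minor2 A a b d c = - minor2 A a b c d"
  unfolding minor2_def by simp

lemma minor2_same_rows: "minor2 A a a c d = 0"
  unfolding minor2_def by simp

lemma minor2_same_cols: "minor2 A a b c c = 0"
  unfolding minor2_def by simp

lemma abs_minor2_normalize:
  assumes "a < 2" "b < 2" "a \<noteq> b" "c \<noteq> d"
  shows "\<bar>minor2 A a b c d\<bar> = \<bar>minor2 A 0 1 (min c d) (max c d)\<bar>"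
proof -
  have rows: "\<bar>minor2 A a b c d\<bar> = \<bar>minor2 A 0 1 c d\<bar>"
  proof -
    have "a = 0 \<and> b = 1 \<or> a = 1 \<and> b = 0" using assms(1-3) by auto
    then show ?thesis using minor2_swap_rows[of A 0 1 c d] by auto
  qed
  show ?thesis
  proof (cases "c < d")
    case True then show ?thesis using rows by simp
  next
    case False then show ?thesis using rows minor2_swap_cols[of A 0 1 c d] by simp
  qed
qed

lemma pm1_minor_values:
  fixes x y z w :: real
  assumes "x \<in> {-1,0,1}" "y \<in> {-1,0,1}" "z \<in> {-1,0,1}" "w \<in> {-1,0,1}"
  shows "x * y - z * w \<in> {-2,-1,0,1,2}"
  using assms by (elim insertE emptyE) simp_all

lemma det_2x2:
  assumes "A \<in> carrier_mat 2 2"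
  shows "det A = A $$ (0,0) * A $$ (1,1) - A $$ (0,1) * A $$ (1,0)"
proof -
  have "det A = (\<Sum>j<2. A $$ (0,j) * cofactor A 0 j)"
    by (rule laplace_expansion_row[OF assms]) simp
  also have "\<dots> = A $$ (0,0) * cofactor A 0 0 + A $$ (0,1) * cofactor A 0 1"
    by (simp add: numeral_2_eq_2)
  also have "cofactor A 0 0 = A $$ (1,1)"
    unfolding cofactor_def using assms by (subst det_single) (auto simp: mat_delete_def)
  also have "cofactor A 0 1 = - A $$ (1,0)"
    unfolding cofactor_def using assms by (subst det_single) (auto simp: mat_delete_def)
  finally show ?thesis by simp
qed

lemma pick_doubleton:
  assumes "(a::nat) < b"
  shows "pick {a,b} 0 = a" "pick {a,b} 1 = b"
proof -
  show 0: "pick {a,b} 0 = a" using assms by (auto intro!: Least_equality)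
  have "pick {a,b} (Suc 0) = (LEAST x. x \<in> {a,b} \<and> x > pick {a,b} 0)" by simp
  also have "\<dots> = b" unfolding 0 using assms by (auto intro!: Least_equality)
  finally show "pick {a,b} 1 = b" by simp
qed

lemma pick_compl_singleton:
  assumes "r < n - 1" "x < n"
  shows "pick (- {x}) r < n" "pick (- {x}) r \<noteq> x"
proof -
  have "{a. a < n \<and> a \<in> - {x}} = {..<n} - {x}" by auto
  then have "card {a. a < n \<and> a \<in> - {x}} = n - 1" using assms(2) by simp
  then show "pick (- {x}) r < n" using pick_le assms(1) by simp
  have "infinite (- {x})" by (simp add: infinite_UNIV_nat)
  then show "pick (- {x}) r \<noteq> x" using pick_in_set_inf by blast
qed

lemma card_bounded_subset: "S \<subseteq> {..<n} \<Longrightarrow> card {a. a < n \<and> a \<in> S} = card S"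
  by (metis (no_types, lifting) Collect_cong Int_absorb1 Int_def lessThan_def mem_Collect_eq)

lemma det_submatrix_card_le_2:
  assumes R: "R \<subseteq> {..<dim_row A}" and C: "C \<subseteq> {..<dim_col A}" and k: "card R = card C"
  shows "card R = 0 \<Longrightarrow> det (submatrix A R C) = 1"
    and "card R = 1 \<Longrightarrow> det (submatrix A R C) = A $$ (pick R 0, pick C 0)"
    and "card R = 2 \<Longrightarrow> det (submatrix A R C) = minor2 A (pick R 0) (pick R 1) (pick C 0) (pick C 1)"
proof -
  have cr: "card {a. a < dim_row A \<and> a \<in> R} = card R" by (rule card_bounded_subset[OF R])
  have cc: "card {a. a < dim_col A \<and> a \<in> C} = card R" using card_bounded_subset[OF C] k by argo
  have "dim_row (submatrix A R C) = card R" "dim_col (submatrix A R C) = card R"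
    using cr cc by (simp_all only: dim_submatrix)
  then have car: "submatrix A R C \<in> carrier_mat (card R) (card R)" by (rule carrier_matI)
  have idx: "submatrix A R C $$ (x,y) = A $$ (pick R x, pick C y)" if "x < card R" "y < card R" for x y
    using that cr cc by (intro submatrix_index) simp_all
  show "card R = 0 \<Longrightarrow> det (submatrix A R C) = 1"
    using car by simp
  show "card R = 1 \<Longrightarrow> det (submatrix A R C) = A $$ (pick R 0, pick C 0)"
  proof -
    assume "card R = 1"
    then have "det (submatrix A R C) = submatrix A R C $$ (0,0)" using car by (intro det_single) simp
    then show ?thesis using idx[of 0 0] \<open>card R = 1\<close> by simp
  qed
  show "card R = 2 \<Longrightarrow> det (submatrix A R C) = minor2 A (pick R 0) (pick R 1) (pick C 0) (pick C 1)"
  proof -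
    assume "card R = 2"
    then have "det (submatrix A R C) = submatrix A R C $$ (0,0) * submatrix A R C $$ (1,1)
        - submatrix A R C $$ (0,1) * submatrix A R C $$ (1,0)" using car by (intro det_2x2) simp
    then show ?thesis
      unfolding minor2_def using idx[of 0 0] idx[of 0 1] idx[of 1 0] idx[of 1 1] \<open>card R = 2\<close> by simp
  qed
qed

lemma det_submatrix_doubletons:
  assumes "a < b" "b < dim_row A" "c < d" "d < dim_col A"
  shows "det (submatrix A {a,b} {c,d}) = minor2 A a b c d"
proof -
  have R: "{a,b} \<subseteq> {..<dim_row A}" and C: "{c,d} \<subseteq> {..<dim_col A}" using assms by auto
  have ab: "card {a,b} = 2" and cd: "card {c,d} = 2" using assms(1,3) by auto
  have "det (submatrix A {a,b} {c,d})
      = minor2 A (pick {a,b} 0) (pick {a,b} 1) (pick {c,d} 0) (pick {c,d} 1)"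
    by (rule det_submatrix_card_le_2(3)[OF R C]) (simp_all only: ab cd)
  then show ?thesis unfolding pick_doubleton[OF assms(1)] pick_doubleton[OF assms(3)] .
qed

lemma row_sub_dims:
  "dim_row (row_sub A S) = card {i. i < dim_row A \<and> i \<in> S}" "dim_col (row_sub A S) = dim_col A"
  unfolding row_sub_def by (simp_all add: dim_submatrix)

lemma dim_row_row_sub_le: "finite S \<Longrightarrow> dim_row (row_sub A S) \<le> card S"
  unfolding row_sub_dims by (rule card_mono) auto

lemma row_sub_index:
  assumes "r < dim_row (row_sub A S)" "c < dim_col A"
  shows "row_sub A S $$ (r,c) = A $$ (pick S r, c)" "pick S r < dim_row A"
proof -
  have r: "r < card {i. i < dim_row A \<and> i \<in> S}" using assms(1) row_sub_dims(1) by simp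
  show "row_sub A S $$ (r,c) = A $$ (pick S r, c)"
    unfolding row_sub_def using submatrix_index[OF r] assms(2) by (simp add: pick_UNIV)
  show "pick S r < dim_row A" using pick_le[OF r] .
qed

lemma row_sub_doubleton:
  assumes "a < b" "b < dim_row A"
  shows "dim_row (row_sub A {a,b}) = 2"
    and "c < dim_col A \<Longrightarrow> row_sub A {a,b} $$ (0,c) = A $$ (a,c)"
    and "c < dim_col A \<Longrightarrow> row_sub A {a,b} $$ (1,c) = A $$ (b,c)"
proof -
  have "{i. i < dim_row A \<and> i \<in> {a,b}} = {a,b}" using assms by auto
  then show d: "dim_row (row_sub A {a,b}) = 2" unfolding row_sub_dims using assms by simp
  show "c < dim_col A \<Longrightarrow> row_sub A {a,b} $$ (0,c) = A $$ (a,c)"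
    using row_sub_index(1)[of 0 A "{a,b}" c] d pick_doubleton[OF assms(1)] by simp
  show "c < dim_col A \<Longrightarrow> row_sub A {a,b} $$ (1,c) = A $$ (b,c)"
    using row_sub_index(1)[of 1 A "{a,b}" c] d pick_doubleton[OF assms(1)] by simp
qed

lemma row_sub_all_rows: "row_sub A {..<dim_row A} = A"
proof (rule eq_matI)
  have "{i. i < dim_row A \<and> i \<in> {..<dim_row A}} = {..<dim_row A}" by auto
  then show dr: "dim_row (row_sub A {..<dim_row A}) = dim_row A" unfolding row_sub_dims by simp
  show "dim_col (row_sub A {..<dim_row A}) = dim_col A" by (simp add: row_sub_dims)
  fix r c assume rc: "r < dim_row A" "c < dim_col A"
  have "pick {..<dim_row A} r = r"
    using pick_reduce_set[of r "dim_row A" UNIV] rc(1) by (simp add: pick_UNIV lessThan_def)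
  then show "row_sub A {..<dim_row A} $$ (r, c) = A $$ (r, c)"
    using row_sub_index(1)[of r A "{..<dim_row A}" c] dr rc by simp
qed

definition pm1_minors2 :: "real mat \<Rightarrow> bool" where
  "pm1_minors2 A \<longleftrightarrow> zero_pm1 A \<and>
     (\<forall>a b c d. a < dim_row A \<longrightarrow> b < dim_row A \<longrightarrow> c < dim_col A \<longrightarrow> d < dim_col A \<longrightarrow>
        minor2 A a b c d \<in> {-1, 0, 1})"

lemma tot_unimod_if_pm1_minors2:
  assumes A: "pm1_minors2 A" and rows: "dim_row A \<le> 2"
  shows "tot_unimod A"
  unfolding tot_unimod_def
proof (intro allI impI)
  fix R C assume R: "R \<subseteq> {..<dim_row A}" and C: "C \<subseteq> {..<dim_col A}" and k: "card R = card C"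
  have "card R \<le> 2" using card_mono[OF _ R] rows by simp
  then consider "card R = 0" | "card R = 1" | "card R = 2" by linarith
  moreover have "pick R x < dim_row A" "pick C x < dim_col A" if "x < card R" for x
    using that pick_le card_bounded_subset[OF R] card_bounded_subset[OF C] k by simp_all
  ultimately show "det (submatrix A R C) \<in> {-1, 0, 1}"
    using det_submatrix_card_le_2[OF R C k] A unfolding pm1_minors2_def zero_pm1_def
    by cases (simp_all del: pick.simps)
qed

lemma pm1_minors2_row_sub:
  assumes "pm1_minors2 A"
  shows "pm1_minors2 (row_sub A S)"
  using assms row_sub_index[of _ A S] unfolding pm1_minors2_def zero_pm1_def minor2_def row_sub_dims(2)
  by auto

lemma not_te_lace_if_pm1_minors2:
  assumes "pm1_minors2 A" "dim_row A \<le> 2"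
  shows "\<not> te_lace A"
  using tot_unimod_if_pm1_minors2[OF assms] unfolding te_lace_def te_set_def tu_set_def by blast

lemma not_te_interlace_if_pm1_minors2:
  assumes A: "pm1_minors2 A"
  shows "\<not> te_interlace A"
proof
  assume interlace: "te_interlace A"
  show False
  proof (cases "dim_row A \<le> 2")
    case True
    then show False
      using interlace tot_unimod_if_pm1_minors2[OF A] unfolding te_interlace_def te_set_def tu_set_def
      by blast
  next
    case False
    then have "te_lace (row_sub A {0,1})" using interlace unfolding te_interlace_def by auto
    moreover have "dim_row (row_sub A {0,1}) \<le> 2" using dim_row_row_sub_le[of "{0,1}" A] by simp
    ultimately show False using not_te_lace_if_pm1_minors2[OF pm1_minors2_row_sub[OF A]] by blast
  qed
qed

lemma te_lace_minor2:
  assumes lace: "te_lace A" and rows: "dim_row A = 2" and cd: "c < dim_col A" "d < dim_col A"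
  shows "minor2 A 0 1 c d \<in> {-2, 0, 2}"
proof -
  have zp: "zero_pm1 A" and indep: "rows_lin_indep A" and equi: "tot_equimod A"
    and not_tu: "\<not> tot_unimod A"
    using lace unfolding te_lace_def te_set_def tu_set_def by blast+
  have all_rows: "{..<dim_row A} = {0,1}" using rows by auto
  have same_abs: "\<bar>minor2 A 0 1 x y\<bar> = \<bar>minor2 A 0 1 x' y'\<bar>"
    if xy: "x < y" "y < dim_col A" "x' < y'" "y' < dim_col A"
      and nonzero: "minor2 A 0 1 x y \<noteq> 0" "minor2 A 0 1 x' y' \<noteq> 0" for x y x' y'
  proof -
    have "rows_lin_indep (row_sub A {0,1})" using indep row_sub_all_rows[of A] all_rows by simp
    then have "\<forall>C1 C2. C1 \<subseteq> {..<dim_col A} \<longrightarrow> C2 \<subseteq> {..<dim_col A} \<longrightarrow>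
        card C1 = card {0::nat,1} \<longrightarrow> card C2 = card {0::nat,1} \<longrightarrow>
        det (submatrix A {0,1} C1) \<noteq> 0 \<longrightarrow> det (submatrix A {0,1} C2) \<noteq> 0 \<longrightarrow>
        \<bar>det (submatrix A {0,1} C1)\<bar> = \<bar>det (submatrix A {0,1} C2)\<bar>"
      using equi all_rows unfolding tot_equimod_def by blast
    moreover have "{x,y} \<subseteq> {..<dim_col A}" "{x',y'} \<subseteq> {..<dim_col A}"
      "card {x,y} = card {0::nat,1}" "card {x',y'} = card {0::nat,1}" using xy by auto
    ultimately have "det (submatrix A {0,1} {x,y}) \<noteq> 0 \<Longrightarrow> det (submatrix A {0,1} {x',y'}) \<noteq> 0 \<Longrightarrow>
        \<bar>det (submatrix A {0,1} {x,y})\<bar> = \<bar>det (submatrix A {0,1} {x',y'})\<bar>"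
      by blast
    moreover have "det (submatrix A {0,1} {x,y}) = minor2 A 0 1 x y"
      "det (submatrix A {0,1} {x',y'}) = minor2 A 0 1 x' y'"
      using det_submatrix_doubletons[of 0 1 A] rows xy by simp_all
    ultimately show ?thesis using nonzero by simp
  qed
  obtain c0 d0 where c0d0: "c0 < d0" "d0 < dim_col A" "\<bar>minor2 A 0 1 c0 d0\<bar> = 2"
  proof -
    have "\<not> pm1_minors2 A" using not_tu tot_unimod_if_pm1_minors2[of A] rows by auto
    then obtain a b x y where ab: "a < 2" "b < 2" and xy: "x < dim_col A" "y < dim_col A"
      and bad: "minor2 A a b x y \<notin> {-1, 0, 1}"
      using zp rows unfolding pm1_minors2_def by auto
    have ne: "a \<noteq> b" "x \<noteq> y" using bad minor2_same_rows minor2_same_cols by auto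
    moreover have "minor2 A a b x y \<in> {-2,-1,0,1,2}"
      using zp ab xy rows unfolding zero_pm1_def minor2_def by (intro pm1_minor_values) auto
    ultimately have "\<bar>minor2 A a b x y\<bar> = 2" using bad by auto
    then have "\<bar>minor2 A 0 1 (min x y) (max x y)\<bar> = 2"
      unfolding abs_minor2_normalize[OF ab ne] .
    then show thesis using that[of "min x y" "max x y"] xy \<open>x \<noteq> y\<close> by (simp add: max_def)
  qed
  show ?thesis
  proof (cases "minor2 A 0 1 c d = 0")
    case False
    then have "c \<noteq> d" using minor2_same_cols by auto
    have normal: "\<bar>minor2 A 0 1 c d\<bar> = \<bar>minor2 A 0 1 (min c d) (max c d)\<bar>"
      by (rule abs_minor2_normalize) (simp_all add: \<open>c \<noteq> d\<close>)
    also have "\<dots> = \<bar>minor2 A 0 1 c0 d0\<bar>"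
    proof (rule same_abs)
      show "minor2 A 0 1 (min c d) (max c d) \<noteq> 0" using False normal by auto
    qed (use c0d0 \<open>c \<noteq> d\<close> cd in \<open>auto simp: min_def max_def\<close>)
    finally show ?thesis using c0d0(3) by auto
  qed simp
qed

lemma te_interlace_minor2:
  assumes interlace: "te_interlace A" and "a < dim_row A" "b < dim_row A" "a \<noteq> b"
    and cd: "c < dim_col A" "d < dim_col A"
  shows "minor2 A a b c d \<in> {-2, 0, 2}"
proof -
  have ordered: "minor2 A x y c d \<in> {-2, 0, 2}" if xy: "x < y" "y < dim_row A" for x y
  proof -
    have "te_lace (row_sub A {x,y})" using interlace xy unfolding te_interlace_def by auto
    then have "minor2 (row_sub A {x,y}) 0 1 c d \<in> {-2, 0, 2}"
      using te_lace_minor2 row_sub_doubleton(1)[OF xy] cd by (simp add: row_sub_dims)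
    then show ?thesis using row_sub_doubleton[OF xy] cd unfolding minor2_def by simp
  qed
  show ?thesis
  proof (cases "a < b")
    case False
    then have "minor2 A b a c d \<in> {-2, 0, 2}" using ordered assms(2,4) by simp
    then show ?thesis using minor2_swap_rows[of A b a c d] by auto
  qed (use ordered assms(3) in simp)
qed

lemma dim_trim:
  assumes "i < dim_row A" "j < dim_col A"
  shows "dim_row (trim A i j) = dim_row A - 1" "dim_col (trim A i j) = dim_col A - 1"
proof -
  have "{a. a < n \<and> a \<in> - {x}} = {..<n} - {x}" for n x :: nat by auto
  then show "dim_row (trim A i j) = dim_row A - 1" "dim_col (trim A i j) = dim_col A - 1"
    unfolding trim_def dim_submatrix pivot_op_def using assms by simp_all
qed

lemma pick_trim_bounds:
  assumes ij: "i < dim_row A" "j < dim_col A"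
    and rc: "r < dim_row (trim A i j)" "c < dim_col (trim A i j)"
  shows "pick (- {i}) r < dim_row A" "pick (- {i}) r \<noteq> i"
    and "pick (- {j}) c < dim_col A" "pick (- {j}) c \<noteq> j"
proof -
  have r: "r < dim_row A - 1" and c: "c < dim_col A - 1" using rc dim_trim[OF ij] by simp_all
  show "pick (- {i}) r < dim_row A" "pick (- {i}) r \<noteq> i"
    using pick_compl_singleton[OF r ij(1)] by auto
  show "pick (- {j}) c < dim_col A" "pick (- {j}) c \<noteq> j"
    using pick_compl_singleton[OF c ij(2)] by auto
qed

lemma trim_index:
  assumes pivot: "A $$ (i,j) \<noteq> 0" and ij: "i < dim_row A" "j < dim_col A"
    and rc: "r < dim_row (trim A i j)" "c < dim_col (trim A i j)"
  shows "trim A i j $$ (r,c) = minor2 A i (pick (- {i}) r) j (pick (- {j}) c) / A $$ (i,j)"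
proof -
  let ?a = "pick (- {i}) r" and ?c = "pick (- {j}) c"
  note bounds = pick_trim_bounds[OF ij rc]
  have "trim A i j $$ (r,c) = pivot_op A i j $$ (?a, ?c)"
    unfolding trim_def using rc by (intro submatrix_index) (simp_all add: dim_submatrix trim_def)
  also have "\<dots> = A $$ (?a,?c) - A $$ (?a,j) / A $$ (i,j) * A $$ (i,?c)"
    unfolding pivot_op_def using bounds by simp
  also have "\<dots> = minor2 A i ?a j ?c / A $$ (i,j)"
    unfolding minor2_def using pivot by (simp add: field_simps)
  finally show ?thesis .
qed

lemma te_interlace_trim_entry:
  assumes "te_interlace I" "i < dim_row I" "j < dim_col I" "I $$ (i,j) \<noteq> 0"
    and rc: "r < dim_row (trim I i j)" "c < dim_col (trim I i j)"
  shows "trim I i j $$ (r,c) \<in> {-2, 0, 2}"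
proof -
  have "I $$ (i,j) \<in> {-1, 1}"
    using assms(1-4) unfolding te_interlace_def te_set_def zero_pm1_def by auto
  moreover have "minor2 I i (pick (- {i}) r) j (pick (- {j}) c) \<in> {-2, 0, 2}"
    using pick_trim_bounds[OF assms(2,3) rc] by (intro te_interlace_minor2[OF assms(1,2)] assms(3)) auto
  ultimately show ?thesis using trim_index[OF assms(4,2,3) rc] by auto
qed

lemma half_pm2_entry:
  fixes s x y z :: real
  assumes "s \<in> {-1, 1}" "x \<in> {-1, 0, 1}" "y \<in> {-1, 0, 1}" "z \<in> {-1, 0, 1}"
    and "s * x - z * y \<in> {-2, 0, 2}"
  shows "1/2 * ((s * x - z * y) / s) \<in> {-1, 0, 1}"
    and "1/2 * ((s * x - z * y) / s) \<noteq> 0 \<Longrightarrow> 1/2 * ((s * x - z * y) / s) = (- s * y) * z"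
  using assms by (elim insertE emptyE; simp)+

lemma pm1_minors2_if_sign_pattern:
  fixes u v :: "nat \<Rightarrow> real"
  assumes pm1: "zero_pm1 A"
    and pattern: "\<And>a c. a < dim_row A \<Longrightarrow> c < dim_col A \<Longrightarrow> A $$ (a,c) \<noteq> 0 \<Longrightarrow> A $$ (a,c) = u a * v c"
  shows "pm1_minors2 A"
  unfolding pm1_minors2_def
proof (intro conjI allI impI pm1)
  fix a b c d assume abcd: "a < dim_row A" "b < dim_row A" "c < dim_col A" "d < dim_col A"
  have entries: "A $$ (x,y) \<in> {-1, 0, 1}" if "x \<in> {a,b}" "y \<in> {c,d}" for x y
    using pm1 abcd that unfolding zero_pm1_def by auto
  show "minor2 A a b c d \<in> {-1, 0, 1}"
  proof (cases "A $$ (a,c) = 0 \<or> A $$ (b,d) = 0 \<or> A $$ (a,d) = 0 \<or> A $$ (b,c) = 0")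
    case True
    then show ?thesis
      using entries[of a c] entries[of b d] entries[of a d] entries[of b c] unfolding minor2_def
      by (elim disjE) (auto elim!: insertE)
  next
    case False
    then have "A $$ (a,c) = u a * v c" "A $$ (b,d) = u b * v d"
      "A $$ (a,d) = u a * v d" "A $$ (b,c) = u b * v c"
      using pattern abcd by auto
    then show ?thesis unfolding minor2_def by simp
  qed
qed

lemma pm1_minors2_half_trim:
  assumes interlace: "te_interlace I" and ij: "i < dim_row I" "j < dim_col I"
    and pivot: "I $$ (i,j) \<noteq> 0"
  shows "pm1_minors2 ((1/2) \<cdot>\<^sub>m trim I i j)"
proof -
  define s where "s = I $$ (i,j)"
  have entry: "I $$ (a,c) \<in> {-1, 0, 1}" if "a < dim_row I" "c < dim_col I" for a c
    using interlace that unfolding te_interlace_def te_set_def zero_pm1_def by blast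
  have s: "s \<in> {-1, 1}" using entry[OF ij] pivot unfolding s_def by auto
  let ?H = "(1/2) \<cdot>\<^sub>m trim I i j"
  have half: "?H $$ (r,c) \<in> {-1, 0, 1} \<and>
      (?H $$ (r,c) \<noteq> 0 \<longrightarrow> ?H $$ (r,c) = (- s * I $$ (pick (- {i}) r, j)) * I $$ (i, pick (- {j}) c))"
    if rc: "r < dim_row (trim I i j)" "c < dim_col (trim I i j)" for r c
  proof -
    let ?a = "pick (- {i}) r" and ?c = "pick (- {j}) c"
    note bounds = pick_trim_bounds[OF ij rc]
    have "minor2 I i ?a j ?c \<in> {-2, 0, 2}"
      using bounds by (intro te_interlace_minor2[OF interlace ij(1)] ij(2)) auto
    moreover have "minor2 I i ?a j ?c = s * I $$ (?a,?c) - I $$ (i,?c) * I $$ (?a,j)"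
      unfolding minor2_def s_def by simp
    moreover have "?H $$ (r,c) = 1/2 * (minor2 I i ?a j ?c / s)"
      using trim_index[OF pivot ij rc] rc unfolding s_def by simp
    ultimately show ?thesis
      using half_pm2_entry[OF s entry[of ?a ?c] entry[of ?a j] entry[of i ?c]] bounds ij by simp
  qed
  show ?thesis
  proof (rule pm1_minors2_if_sign_pattern[where u = "\<lambda>r. - s * I $$ (pick (- {i}) r, j)"
        and v = "\<lambda>c. I $$ (i, pick (- {j}) c)"])
    show "zero_pm1 ?H" using half unfolding zero_pm1_def by simp
  qed (use half in simp)
qed

theorem mainTheorem7:
  fixes I :: "real mat" and i j :: nat
  assumes "te_interlace I"
    and "i < dim_row I" and "j < dim_col I" and "I $$ (i,j) \<noteq> 0"
  shows "(\<forall>r<dim_row (trim I i j). \<forall>c<dim_col (trim I i j).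
            trim I i j $$ (r,c) \<noteq> 0 \<longrightarrow> \<bar>trim I i j $$ (r,c)\<bar> = 2)
       \<and> (\<forall>r1 r2. r1 < dim_row (trim I i j) \<longrightarrow> r2 < dim_row (trim I i j) \<longrightarrow> r1 \<noteq> r2 \<longrightarrow>
            \<not> te_lace (row_sub ((1/2) \<cdot>\<^sub>m trim I i j) {r1, r2}))
       \<and> (\<forall>S. S \<subseteq> {..<dim_row (trim I i j)} \<longrightarrow>
            \<not> te_interlace (row_sub ((1/2) \<cdot>\<^sub>m trim I i j) S))"
proof -
  let ?H = "(1/2) \<cdot>\<^sub>m trim I i j"
  have H: "pm1_minors2 (row_sub ?H S)" for S
    using pm1_minors2_row_sub[OF pm1_minors2_half_trim[OF assms]] .
  have "\<forall>r<dim_row (trim I i j). \<forall>c<dim_col (trim I i j).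
      trim I i j $$ (r,c) \<noteq> 0 \<longrightarrow> \<bar>trim I i j $$ (r,c)\<bar> = 2"
    using te_interlace_trim_entry[OF assms] by fastforce
  moreover have "\<not> te_lace (row_sub ?H {r1, r2})" for r1 r2
  proof -
    have "dim_row (row_sub ?H {r1, r2}) \<le> card {r1, r2}" by (rule dim_row_row_sub_le) simp
    also have "\<dots> \<le> 2" by (simp add: card_insert_le_m1)
    finally have "dim_row (row_sub ?H {r1, r2}) \<le> 2" .
    then show ?thesis using not_te_lace_if_pm1_minors2 H by blast
  qed
  moreover have "\<not> te_interlace (row_sub ?H S)" for S
    using not_te_interlace_if_pm1_minors2 H by blast
  ultimately show ?thesis by blast
qed

end
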